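(* Let $\alpha\in\mathbb{C}$ and let $S_n(x)\sim\left(\left(\frac{e^t+1}{2}\right)^{\alpha},\ \frac{t^2}{\log(1+t)}\right)$. Then for $n\ge1$, $$S_n(x)=\sum_{l=0}^{n-1}\binom{n-1}{l}N_l^{(n)}\,E_{n-l}^{(\alpha)}(x).$$
   Context: For invertible $g(t)$ (nonzero constant term) and delta series $f(t)$ ($f(0)=0$, nonzero coefficient of $t$), the Sheffer sequence $S_n(x)\sim(g(t),f(t))$ is the unique polynomial sequence with $\sum_{k\ge0}S_k(y)\frac{t^k}{k!}=\frac{1}{g(\bar f(t))}e^{y\bar f(t)}$ for all $y\in\mathbb{C}$, where $\bar f$ is the compositional inverse of $f$. Complex powers of series with constant term $1$ are defined by $h^a=\exp(a\log h)$. The Narumi polynomials of order $a$ are defined by $\left(\frac{\log(1+t)}{t}\right)^a(1+t)^x=\sum_{n\ge0}N_n^{(a)}(x)\frac{t^n}{n!}$, and the Narumi numbers are $N_n^{(a)}=N_n^{(a)}(0)$. The Euler polynomials of order $\alpha$ are defined by $\left(\frac{2}{e^t+1}\right)^{\alpha}e^{xt}=\sum_{n\ge0}E_n^{(\alpha)}(x)\frac{t^n}{n!}$. *)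

theory Defs
  imports "HOL-Computational_Algebra.Computational_Algebra"
begin

text \<open>Logarithm of a formal power series with constant term 1:
  log h = log(1+u) composed with u = h - 1.  (fps_ln 1 is the series of log(1+t).)\<close>
definition fps_log1 :: "complex fps \<Rightarrow> complex fps" where
  "fps_log1 h = fps_ln 1 oo (h - 1)"

text \<open>Complex power of a series with constant term 1: h^a = exp(a log h).
  (fps_exp a is the series of exp(a t).)\<close>
definition fps_cpow :: "complex fps \<Rightarrow> complex \<Rightarrow> complex fps" where
  "fps_cpow h a = fps_exp a oo fps_log1 h"

definition sheffer :: "(nat \<Rightarrow> complex poly) \<Rightarrow> complex fps \<Rightarrow> complex fps \<Rightarrow> bool" where
  "sheffer S g f \<longleftrightarrow>
     (\<forall>y::complex. Abs_fps (\<lambda>k. poly (S k) y / fact k)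
        = inverse (g oo fps_inv f) * (fps_exp y oo fps_inv f))"

definition narumi_poly :: "nat \<Rightarrow> complex \<Rightarrow> complex \<Rightarrow> complex" where
  "narumi_poly n a x = fact n *
     (fps_cpow (fps_ln 1 / fps_X) a * fps_cpow (1 + fps_X) x) $ n"

definition narumi_num :: "nat \<Rightarrow> complex \<Rightarrow> complex" where
  "narumi_num n a = narumi_poly n a 0"

definition euler_poly :: "nat \<Rightarrow> complex \<Rightarrow> complex \<Rightarrow> complex" where
  "euler_poly n \<alpha> x = fact n *
     (fps_cpow (fps_const 2 / (fps_exp 1 + 1)) \<alpha> * fps_exp x) $ n"

end

theory Submission
  imports Defs
begin

(* With Q = log(1+t)/t, which has constant term 1, the delta series is f = t/Q, and the
   exponential generating function of S is H(fbar t), where H = ((e^t+1)/2)^(-alpha) e^(xt)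
   generates the Euler polynomials of order alpha.  Lagrange inversion gives
   n [t^n] H(fbar t) = [t^(n-1)] H'(t) Q(t)^n.  A complex power with natural exponent is the
   ordinary power, so Q^n generates the Narumi numbers N_l^(n), and expanding the product
   H' Q^n coefficientwise yields the binomial sum. *)

lemma fps_eq_if_same_logarithmic_derivative:
  fixes C D w :: "'a::field_char_0 fps"
  assumes "fps_deriv C = C * w" and "fps_deriv D = D * w"
    and "C $ 0 = D $ 0" and D0: "D $ 0 \<noteq> 0"
  shows "C = D"
proof -
  have DiD: "D * inverse D = 1" using inverse_mult_eq_1'[OF D0] .
  have "fps_deriv (C * inverse D) = C * w * inverse D * (1 - D * inverse D)"
    using assms by (simp add: fps_inverse_deriv power2_eq_square algebra_simps)
  hence "fps_deriv (C * inverse D) = fps_deriv 1" by (simp add: DiD)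
  hence "C * inverse D = fps_const ((C * inverse D) $ 0 - 1) + 1"
    unfolding fps_deriv_eq_iff by simp
  also have "(C * inverse D) $ 0 = 1" using assms by (simp add: fps_inverse_def)
  finally have "C * inverse D = 1" by simp
  hence "C * (D * inverse D) = D" by (metis mult.assoc mult.commute mult_1)
  thus ?thesis by (simp add: DiD)
qed

lemma fps_log1_nth_0 [simp]: "h $ 0 = 1 \<Longrightarrow> fps_log1 h $ 0 = 0"
  by (simp add: fps_log1_def fps_ln_nth)

lemma fps_deriv_fps_log1:
  assumes h0: "h $ 0 = 1"
  shows "fps_deriv (fps_log1 h) = fps_deriv h * inverse h"
proof -
  have u0: "(h - 1) $ 0 = 0" using h0 by simp
  have "fps_deriv (fps_log1 h) = (inverse (1 + fps_X) oo (h - 1)) * fps_deriv h"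
    unfolding fps_log1_def using fps_compose_deriv[OF u0] by (simp add: fps_ln_deriv)
  also have "inverse (1 + fps_X) oo (h - 1) = inverse ((1 + fps_X) oo (h - 1))"
    by (rule fps_inverse_compose[OF u0]) simp
  also have "(1 + fps_X) oo (h - 1) = h"
    using u0 by (simp add: fps_compose_add_distrib)
  finally show ?thesis by (simp add: mult.commute)
qed

lemma fps_cpow_nth_0 [simp]: "h $ 0 = 1 \<Longrightarrow> fps_cpow h a $ 0 = 1"
  by (simp add: fps_cpow_def)

lemma fps_cpow_0 [simp]: "fps_cpow h 0 = 1"
  by (simp add: fps_cpow_def)

lemma fps_deriv_fps_cpow:
  assumes h0: "h $ 0 = 1"
  shows "fps_deriv (fps_cpow h a) = fps_cpow h a * (fps_const a * (fps_deriv h * inverse h))"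
proof -
  have "fps_deriv (fps_cpow h a) = (fps_deriv (fps_exp a) oo fps_log1 h) * fps_deriv (fps_log1 h)"
    unfolding fps_cpow_def by (rule fps_compose_deriv) (simp add: h0)
  also have "fps_deriv (fps_exp a) oo fps_log1 h = fps_const a * fps_cpow h a"
    unfolding fps_cpow_def using h0 by (simp add: fps_compose_mult_distrib)
  finally show ?thesis using h0 by (simp add: fps_deriv_fps_log1 mult_ac)
qed

lemma fps_cpow_inverse:
  assumes h0: "h $ 0 = 1"
  shows "fps_cpow (inverse h) a = inverse (fps_cpow h a)"
proof (rule fps_eq_if_same_logarithmic_derivative)
  let ?C = "fps_cpow h a"
  have ih0: "inverse h $ 0 = 1" using h0 by (simp add: fps_inverse_def)
  have C0: "?C $ 0 \<noteq> 0" using h0 by simp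
  have log_deriv_inverse: "fps_deriv (inverse h) * inverse (inverse h) = - fps_deriv h * inverse h"
    using h0 inverse_mult_eq_1'[of h]
    by (simp add: fps_inverse_deriv power2_eq_square algebra_simps)
  show "fps_deriv (fps_cpow (inverse h) a) =
      fps_cpow (inverse h) a * (fps_const a * (- fps_deriv h * inverse h))"
    using fps_deriv_fps_cpow[OF ih0] by (simp add: log_deriv_inverse)
  have "fps_deriv (inverse ?C)
      = inverse ?C * (fps_const a * (- fps_deriv h * inverse h)) * (?C * inverse ?C)"
    using C0 h0 by (simp add: fps_inverse_deriv fps_deriv_fps_cpow power2_eq_square algebra_simps)
  thus "fps_deriv (inverse ?C) = inverse ?C * (fps_const a * (- fps_deriv h * inverse h))"
    using inverse_mult_eq_1'[OF C0] by simp
  show "fps_cpow (inverse h) a $ 0 = inverse ?C $ 0" "inverse ?C $ 0 \<noteq> 0"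
    using h0 ih0 by (simp_all add: fps_inverse_def)
qed

lemma fps_cpow_of_nat:
  assumes h0: "h $ 0 = 1"
  shows "fps_cpow h (of_nat n) = h ^ n"
proof (rule fps_eq_if_same_logarithmic_derivative)
  show "fps_deriv (fps_cpow h (of_nat n))
      = fps_cpow h (of_nat n) * (of_nat n * (fps_deriv h * inverse h))"
    using fps_deriv_fps_cpow[OF h0] by (simp add: fps_of_nat)
  show "fps_deriv (h ^ n) = h ^ n * (of_nat n * (fps_deriv h * inverse h))"
  proof (cases n)
    case (Suc m)
    have "h ^ n * inverse h = h ^ m" using Suc h0 inverse_mult_eq_1'[of h] by (simp add: mult_ac)
    hence "h ^ n * (of_nat n * (fps_deriv h * inverse h)) = of_nat n * fps_deriv h * h ^ m"
      by (metis mult.assoc mult.commute)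
    thus ?thesis using Suc by (simp only: fps_deriv_power') simp
  qed simp
  show "fps_cpow h (of_nat n) $ 0 = (h ^ n) $ 0" "(h ^ n) $ 0 \<noteq> 0"
    using h0 by (simp_all add: fps_nth_power_0)
qed

lemma fps_deriv_mult_power_nth:
  fixes Q :: "'a::field_char_0 fps"
  shows "(fps_deriv Q * Q ^ k) $ k = (Q ^ Suc k) $ Suc k"
proof -
  have "fps_deriv (Q ^ Suc k) = fps_const (of_nat (Suc k)) * (fps_deriv Q * Q ^ k)"
    by (simp only: fps_deriv_power diff_Suc_1 mult.assoc)
  hence "of_nat (Suc k) * (fps_deriv Q * Q ^ k) $ k = fps_deriv (Q ^ Suc k) $ k"
    by simp
  also have "\<dots> = of_nat (Suc k) * (Q ^ Suc k) $ Suc k"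
    by (simp only: fps_deriv_nth Suc_eq_plus1)
  finally show ?thesis by (simp only: mult_cancel_left of_nat_eq_0_iff) simp
qed

lemma fps_deriv_power_X_mult_inverse:
  fixes Q :: "'a::field fps"
  assumes Q0: "Q $ 0 \<noteq> 0"
  shows "fps_deriv ((fps_X * inverse Q) ^ i) * Q ^ Suc i
           = fps_const (of_nat i) * fps_X ^ (i - 1) * (Q - fps_X * fps_deriv Q)"
proof (cases i)
  case (Suc j)
  define F where "F = fps_X * inverse Q"
  have iQ: "inverse Q * Q = 1" using Q0 by (rule inverse_mult_eq_1)
  have "F ^ j * Q ^ j = fps_X ^ j * (inverse Q * Q) ^ j"
    by (simp add: F_def power_mult_distrib mult_ac)
  hence "F ^ j * Q ^ j = fps_X ^ j" by (simp add: iQ)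
  moreover have "fps_deriv F * Q ^ 2
      = Q * (inverse Q * Q) - fps_X * fps_deriv Q * (inverse Q * Q) ^ 2"
    using Q0 by (simp add: F_def fps_inverse_deriv power2_eq_square algebra_simps)
  hence "fps_deriv F * Q ^ 2 = Q - fps_X * fps_deriv Q" by (simp add: iQ)
  moreover have "Q ^ Suc i = Q ^ j * Q ^ 2" using Suc by (simp flip: power_add)
  hence "fps_deriv (F ^ i) * Q ^ Suc i
      = fps_const (of_nat i) * (F ^ j * Q ^ j) * (fps_deriv F * Q ^ 2)"
    using Suc by (simp only: fps_deriv_power diff_Suc_1 mult_ac)
  ultimately show ?thesis using Suc by (simp add: F_def)
qed simp

(* For i < n the coefficient reduces, with k = n - i, to [t^k] Q^k - [t^(k-1)] Q' Q^(k-1),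
   which vanishes because (Q^k)' = k Q' Q^(k-1). *)
lemma fps_deriv_power_X_mult_inverse_nth:
  fixes Q :: "'a::field_char_0 fps"
  assumes Q0: "Q $ 0 \<noteq> 0" and "i \<le> n"
  shows "(fps_deriv ((fps_X * inverse Q) ^ i) * Q ^ n) $ (n - 1) = (if i = n then of_nat n else 0)"
proof (cases "i = n")
  case True
  have "Q ^ Suc n * inverse Q = Q ^ n * (Q * inverse Q)" by (simp add: mult_ac)
  hence "Q ^ n = Q ^ Suc n * inverse Q" using inverse_mult_eq_1'[OF Q0] by simp
  hence "fps_deriv ((fps_X * inverse Q) ^ n) * Q ^ n
          = fps_deriv ((fps_X * inverse Q) ^ n) * Q ^ Suc n * inverse Q"
    by (simp only: mult.assoc)
  also have "\<dots>
      = fps_X ^ (n - 1) * (fps_const (of_nat n) * ((Q - fps_X * fps_deriv Q) * inverse Q))"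
    by (simp only: fps_deriv_power_X_mult_inverse[OF Q0]) (simp only: mult_ac)
  finally show ?thesis
    using True Q0 by (simp add: fps_X_power_mult_nth fps_inverse_def)
next
  case False
  with \<open>i \<le> n\<close> have "Suc i \<le> n" by simp
  then obtain k where n: "n = Suc i + k" using le_Suc_ex by blast
  have vanish: "((Q - fps_X * fps_deriv Q) * Q ^ k) $ Suc k = 0"
    using fps_deriv_mult_power_nth[of Q k] by (simp add: algebra_simps)
  have "Q ^ n = Q ^ Suc i * Q ^ k" unfolding n by (rule power_add)
  hence "fps_deriv ((fps_X * inverse Q) ^ i) * Q ^ n
      = fps_deriv ((fps_X * inverse Q) ^ i) * Q ^ Suc i * Q ^ k"
    by (simp only: mult.assoc)
  also have "\<dots>
      = fps_X ^ (i - 1) * (fps_const (of_nat i) * ((Q - fps_X * fps_deriv Q) * Q ^ k))"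
    by (simp only: fps_deriv_power_X_mult_inverse[OF Q0]) (simp only: mult_ac)
  finally show ?thesis
    using False n vanish by (cases i) (simp_all add: fps_X_power_mult_nth)
qed

lemma fps_deriv_mult_nth_cong:
  assumes "\<And>j. j \<le> Suc m \<Longrightarrow> R $ j = S $ j"
  shows "(fps_deriv R * Q) $ m = (fps_deriv S * Q) $ m"
  unfolding fps_mult_nth using assms by (intro sum.cong) auto

(* Both sides depend only on the coefficients of H up to Suc m, so H may be replaced by a
   polynomial in F = X/Q, and on the powers of F the identity is the previous lemma. *)
lemma fps_lagrange_inversion:
  fixes Q H :: "'a::field_char_0 fps"
  assumes Q0: "Q $ 0 \<noteq> 0"
  shows "of_nat (Suc m) * (H oo fps_inv (fps_X * inverse Q)) $ Suc m
           = (fps_deriv H * Q ^ Suc m) $ m"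
proof -
  define n where "n = Suc m"
  define F where "F = fps_X * inverse Q"
  define P where "P = H oo fps_inv F"
  have F0: "F $ 0 = 0" by (simp add: F_def)
  have F1: "F $ 1 \<noteq> 0" using Q0 by (simp add: F_def fps_inverse_def)
  have "P oo F = H oo (fps_inv F oo F)"
    unfolding P_def by (rule fps_compose_assoc[OF F0, symmetric]) (simp add: fps_inv_def)
  hence HP: "H = P oo F" using fps_inv[OF F0 F1] by simp
  define T where "T = (\<Sum>i=0..n. fps_const (P $ i) * F ^ i)"
  have HT: "H $ j = T $ j" if "j \<le> n" for j
  proof -
    have "H $ j = (\<Sum>i=0..j. P $ i * (F ^ i) $ j)" unfolding HP fps_compose_nth ..
    also have "\<dots> = (\<Sum>i=0..n. P $ i * (F ^ i) $ j)"
      by (rule sum.mono_neutral_left) (use that startsby_zero_power_prefix[OF F0] in auto)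
    finally show ?thesis by (simp add: T_def fps_sum_nth)
  qed
  have "(fps_deriv H * Q ^ n) $ m = (fps_deriv T * Q ^ n) $ m"
    using HT by (intro fps_deriv_mult_nth_cong) (simp add: n_def)
  also have "\<dots> = (\<Sum>i=0..n. P $ i * (fps_deriv (F ^ i) * Q ^ n) $ m)"
    unfolding T_def fps_deriv_sum sum_distrib_right by (simp add: fps_sum_nth mult.assoc)
  also have "\<dots> = (\<Sum>i=0..n. P $ i * (if i = n then of_nat n else 0))"
    unfolding F_def using fps_deriv_power_X_mult_inverse_nth[OF Q0, of _ n]
    by (intro sum.cong) (auto simp: n_def)
  also have "\<dots> = P $ n * of_nat n" by (simp add: if_distrib sum.delta cong: if_cong)
  finally show ?thesis by (simp add: P_def F_def n_def mult.commute)
qed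

lemma fact_mult_fps_deriv_nth:
  fixes A H :: "'a::field_char_0 fps"
  shows "fact m * (A * fps_deriv H) $ m
           = (\<Sum>l=0..m. of_nat (m choose l) * (fact l * A $ l)
                          * (fact (Suc m - l) * H $ (Suc m - l)))"
  unfolding fps_mult_nth sum_distrib_left
proof (intro sum.cong refl)
  fix l assume "l \<in> {0..m}"
  hence l: "l \<le> m" by simp
  have "(fact m :: 'a) = of_nat (fact l * fact (m - l) * (m choose l))"
    by (simp only: binomial_fact_lemma[OF l] of_nat_fact)
  moreover have "Suc m - l = Suc (m - l)" using l by simp
  ultimately show "fact m * (A $ l * fps_deriv H $ (m - l))
      = of_nat (m choose l) * (fact l * A $ l) * (fact (Suc m - l) * H $ (Suc m - l))"
    by (simp add: algebra_simps)
qed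

lemma fps_X_power2_divide:
  fixes L :: "'a::field fps"
  assumes "L $ 0 = 0" and "L $ 1 \<noteq> 0"
  shows "fps_X ^ 2 / L = fps_X * inverse (L / fps_X)"
proof -
  have L: "L = fps_X * fps_shift 1 L"
    using assms by (intro fps_ext) simp
  have "fps_X ^ 2 / L = (fps_X * fps_X) / (fps_X * fps_shift 1 L)"
    by (subst L) (simp add: power2_eq_square)
  also have "\<dots> = fps_X / fps_shift 1 L" by (rule div_mult_mult1) simp
  also have "\<dots> = fps_X * inverse (fps_shift 1 L)" using assms by (simp add: fps_divide_unit)
  finally show ?thesis by simp
qed

lemma sheffer_fps_cpow_egf:
  assumes "sheffer S (fps_cpow h a) f" and h0: "h $ 0 = 1"
  shows "Abs_fps (\<lambda>k. poly (S k) y / fact k)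
           = (fps_cpow (inverse h) a * fps_exp y) oo fps_inv f"
proof -
  have G0: "fps_inv f $ 0 = 0" by (simp add: fps_inv_def)
  have "Abs_fps (\<lambda>k. poly (S k) y / fact k)
      = inverse (fps_cpow h a oo fps_inv f) * (fps_exp y oo fps_inv f)"
    using assms(1) unfolding sheffer_def by blast
  also have "inverse (fps_cpow h a oo fps_inv f) = fps_cpow (inverse h) a oo fps_inv f"
    using h0 G0 by (simp add: fps_inverse_compose fps_cpow_inverse)
  finally show ?thesis using G0 by (simp add: fps_compose_mult_distrib)
qed

lemma sheffer_poly_Suc_eq:
  assumes "sheffer S (fps_cpow h a) (fps_X * inverse Q)" and "h $ 0 = 1" and "Q $ 0 \<noteq> 0"
  shows "poly (S (Suc m)) y
           = fact m * (Q ^ Suc m * fps_deriv (fps_cpow (inverse h) a * fps_exp y)) $ m"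
proof -
  let ?H = "fps_cpow (inverse h) a * fps_exp y"
  have "poly (S (Suc m)) y / fact (Suc m) = (?H oo fps_inv (fps_X * inverse Q)) $ Suc m"
    using sheffer_fps_cpow_egf[OF assms(1,2), of y] by (simp add: fps_eq_iff del: fact_Suc)
  hence "poly (S (Suc m)) y
      = fact m * (of_nat (Suc m) * (?H oo fps_inv (fps_X * inverse Q)) $ Suc m)"
    by (simp add: field_simps del: of_nat_Suc)
  thus ?thesis using fps_lagrange_inversion[OF assms(3), of m ?H] by (simp add: mult.commute)
qed

theorem theorem4:
  fixes \<alpha> :: complex and S :: "nat \<Rightarrow> complex poly"
  assumes "sheffer S (fps_cpow ((fps_exp 1 + 1) / fps_const 2) \<alpha>)
                     (fps_X ^ 2 / fps_ln 1)"
  shows "\<forall>n\<ge>1. \<forall>x::complex. poly (S n) x =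
           (\<Sum>l=0..n-1. of_nat ((n - 1) choose l) * narumi_num l (of_nat n)
                          * euler_poly (n - l) \<alpha> x)"
proof (intro allI impI)
  fix n :: nat and x :: complex
  assume "1 \<le> n"
  then obtain m where n: "n = Suc m" by (cases n) auto
  define Q :: "complex fps" where "Q = fps_ln 1 / fps_X"
  define H where "H = fps_cpow (fps_const 2 / (fps_exp 1 + 1)) \<alpha> * fps_exp x"
  have Q0: "Q $ 0 = 1" by (simp add: Q_def fps_ln_nth)
  have narumi: "narumi_num l (of_nat n) = fact l * (Q ^ n) $ l" for l
    using fps_cpow_of_nat[OF Q0, of n] by (simp add: narumi_num_def narumi_poly_def Q_def)
  have "fps_X ^ 2 / fps_ln 1 = fps_X * inverse Q"
    unfolding Q_def by (rule fps_X_power2_divide) (simp_all add: fps_ln_nth)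
  moreover have "inverse ((fps_exp 1 + 1) / fps_const 2) = fps_const 2 / (fps_exp (1::complex) + 1)"
    by (simp add: fps_divide_unit fps_inverse_mult fps_const_inverse)
  ultimately have "poly (S n) x = fact m * (Q ^ n * fps_deriv H) $ m"
    using sheffer_poly_Suc_eq[of S _ \<alpha> Q m x] assms Q0 n by (simp add: H_def fps_divide_unit)
  also have "\<dots> = (\<Sum>l=0..m. of_nat (m choose l) * (fact l * (Q ^ n) $ l)
                                * (fact (n - l) * H $ (n - l)))"
    using n by (simp only: fact_mult_fps_deriv_nth)
  also have "\<dots> = (\<Sum>l=0..n-1. of_nat ((n - 1) choose l) * narumi_num l (of_nat n)
                          * euler_poly (n - l) \<alpha> x)"
    unfolding narumi euler_poly_def H_def[symmetric] by (simp add: n mult.assoc)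
  finally show "poly (S n) x = \<dots>" .
qed

end
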